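(* Let $n,\kappa\ge1$. For every $t>0$, the covering number of $\mathcal{S}_{1,2}\subset\mathbb{R}^{n^\kappa}$ satisfies $$\mathcal{N}(\mathcal{S}_{1,2},t)\le\Big(\Big(\frac{6\kappa}{t}\Big)^{\kappa n}+1\Big)^2.$$
   Context: $\mathcal{S}_1=\{\mathbf{u}^1\otimes\cdots\otimes\mathbf{u}^\kappa:\mathbf{u}^i\in\mathbb{S}^{n-1}\}\subset\mathbb{R}^{n^\kappa}$ ($\otimes$ the Kronecker product), $\mathcal{S}_2=\{(\mathbf{x}+\mathbf{y})/\|\mathbf{x}+\mathbf{y}\|_2:\mathbf{x},\mathbf{y}\in\mathcal{S}_1,\langle\mathbf{x},\mathbf{y}\rangle=0\}$, $\mathcal{S}_{1,2}=\mathcal{S}_1\cup\mathcal{S}_2$. The covering number $\mathcal{N}(\mathcal{S},t)$ is the minimal cardinality of a subset of $\mathcal{S}$ such that every element of $\mathcal{S}$ is within Euclidean distance $t$ of an element of the subset. *)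

theory Defs
  imports "HOL-Analysis.Analysis" "HOL-Library.Extended_Nat"
begin

text \<open>Vectors of R^N are represented as functions nat \<Rightarrow> real vanishing outside {..<N}.\<close>

definition vinner :: "nat \<Rightarrow> (nat \<Rightarrow> real) \<Rightarrow> (nat \<Rightarrow> real) \<Rightarrow> real" where
  "vinner N x y = (\<Sum>i<N. x i * y i)"

definition vnorm :: "nat \<Rightarrow> (nat \<Rightarrow> real) \<Rightarrow> real" where
  "vnorm N x = sqrt (\<Sum>i<N. (x i)^2)"

definition vdist :: "nat \<Rightarrow> (nat \<Rightarrow> real) \<Rightarrow> (nat \<Rightarrow> real) \<Rightarrow> real" where
  "vdist N x y = sqrt (\<Sum>i<N. (x i - y i)^2)"

definition usphere :: "nat \<Rightarrow> (nat \<Rightarrow> real) set" where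
  "usphere n = {u. (\<forall>i\<ge>n. u i = 0) \<and> vnorm n u = 1}"

text \<open>Kronecker product u^1 \<otimes> ... \<otimes> u^\<kappa> of \<kappa> vectors in R^n (factors indexed 0..\<kappa>-1,
  the first factor being the most significant), as a vector in R^(n^\<kappa>).\<close>
definition kron :: "nat \<Rightarrow> nat \<Rightarrow> (nat \<Rightarrow> nat \<Rightarrow> real) \<Rightarrow> (nat \<Rightarrow> real)" where
  "kron n \<kappa> us = (\<lambda>j. if j < n ^ \<kappa>
      then (\<Prod>i<\<kappa>. us i ((j div n ^ (\<kappa> - 1 - i)) mod n)) else 0)"

definition S1 :: "nat \<Rightarrow> nat \<Rightarrow> (nat \<Rightarrow> real) set" where
  "S1 n \<kappa> = {kron n \<kappa> us | us. \<forall>i<\<kappa>. us i \<in> usphere n}"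

definition S2 :: "nat \<Rightarrow> nat \<Rightarrow> (nat \<Rightarrow> real) set" where
  "S2 n \<kappa> = {(\<lambda>j. (x j + y j) / vnorm (n ^ \<kappa>) (\<lambda>j. x j + y j)) | x y.
      x \<in> S1 n \<kappa> \<and> y \<in> S1 n \<kappa> \<and> vinner (n ^ \<kappa>) x y = 0}"

definition S12 :: "nat \<Rightarrow> nat \<Rightarrow> (nat \<Rightarrow> real) set" where
  "S12 n \<kappa> = S1 n \<kappa> \<union> S2 n \<kappa>"

definition covering_number :: "nat \<Rightarrow> (nat \<Rightarrow> real) set \<Rightarrow> real \<Rightarrow> enat" where
  "covering_number N S t =
     (INF T \<in> {T. finite T \<and> T \<subseteq> S \<and> (\<forall>x\<in>S. \<exists>y\<in>T. vdist N x y \<le> t)}. enat (card T))"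

end

theory Submission
  imports Defs
begin

text \<open>
  A maximal subset of a product of \<open>B\<close> unit balls of \<open>\<real>\<^sup>n\<close> that is \<open>\<epsilon>\<close>-separated in some block is an
  internal \<open>\<epsilon>\<close>-net, and the products of open \<open>\<epsilon>/2\<close>-balls around its points are disjoint and lie in
  the product of balls of radius \<open>1 + \<epsilon>/2\<close>; comparing volumes gives at most \<open>(1 + 2/\<epsilon>)\<^sup>B\<^sup>n\<close> points.
  The Kronecker product of unit vectors is 1-Lipschitz in each factor, so such nets of \<open>\<kappa>\<close>-tuples of
  unit vectors, and of \<open>2\<kappa>\<close>-tuples whose two Kronecker products are orthogonal, yield a \<open>\<kappa>\<epsilon>\<close>-net of
  \<open>S\<^sub>1\<close> and a \<open>2\<kappa>\<epsilon>\<close>-net of \<open>S\<^sub>2\<close>. With \<open>\<epsilon> = t/(2\<kappa>)\<close> we have \<open>1 + 2/\<epsilon> \<le> 6\<kappa>/t\<close> as long as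
  \<open>t \<le> 2\<kappa>\<close>; for larger \<open>t\<close> a single point covers, since \<open>S\<^sub>1\<^sub>,\<^sub>2\<close> consists of unit vectors.
\<close>

lemma emeasure_lborel_affine_vimage:
  fixes r a :: real
  assumes "r > 0" and "A \<in> sets lborel"
  shows "ennreal r * emeasure lborel ((\<lambda>y. a + r * y) -` A) = emeasure lborel A"
proof -
  have "emeasure lborel A = emeasure (density (distr lborel borel (\<lambda>x. a + r * x)) (\<lambda>_. ennreal r)) A"
    using lborel_real_affine[of r a] assms by simp
  also have "\<dots> = ennreal r * emeasure (distr lborel borel (\<lambda>x. a + r * x)) A"
    using assms by (subst emeasure_density_const) auto
  also have "\<dots> = ennreal r * emeasure lborel ((\<lambda>y. a + r * y) -` A)"
    using assms by (subst emeasure_distr) auto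
  finally show ?thesis by simp
qed

lemma emeasure_PiM_lborel_affine_vimage:
  fixes I :: "'i set" and r :: real and a :: "'i \<Rightarrow> real"
  assumes I: "finite I" and r: "r > 0" and X: "X \<in> sets (PiM I (\<lambda>_. lborel))"
  shows "emeasure (PiM I (\<lambda>_. lborel)) X = ennreal (r ^ card I) *
     emeasure (PiM I (\<lambda>_. lborel)) ((\<lambda>x. \<lambda>i\<in>I. a i + r * x i) -` X \<inter> space (PiM I (\<lambda>_. lborel)))"
proof -
  interpret product_sigma_finite "\<lambda>_::'i. lborel :: real measure" by standard
  let ?M = "PiM I (\<lambda>_::'i. lborel :: real measure)"
  define f where "f = (\<lambda>x. \<lambda>i\<in>I. a i + r * (x i :: real))"
  have f: "f \<in> measurable ?M ?M" unfolding f_def by measurable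
  have "scale_measure (ennreal (r ^ card I)) (distr ?M ?M f) = ?M"
  proof (rule PiM_eqI[OF I])
    fix A assume A: "\<And>i. i \<in> I \<Longrightarrow> A i \<in> sets (lborel :: real measure)"
    have pre: "f -` Pi\<^sub>E I A \<inter> space ?M = Pi\<^sub>E I (\<lambda>i. (\<lambda>y. a i + r * y) -` A i)"
      unfolding f_def space_PiM by (auto simp: PiE_def Pi_def extensional_def)
    have A_pre: "(\<lambda>y. a i + r * y) -` A i \<in> sets lborel" if "i \<in> I" for i
      using measurable_sets[of "\<lambda>y. a i + r * y" borel borel "A i"] A[OF that] by simp
    have "Pi\<^sub>E I A \<in> sets ?M" using A I by (intro sets_PiM_I_finite) auto
    then have "emeasure (scale_measure (ennreal (r ^ card I)) (distr ?M ?M f)) (Pi\<^sub>E I A)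
        = ennreal (r ^ card I) * (\<Prod>i\<in>I. emeasure lborel ((\<lambda>y. a i + r * y) -` A i))"
      using f A_pre I by (simp add: emeasure_distr pre emeasure_PiM)
    also have "\<dots> = (\<Prod>i\<in>I. ennreal r * emeasure lborel ((\<lambda>y. a i + r * y) -` A i))"
      using r by (simp add: prod.distrib ennreal_power)
    also have "\<dots> = (\<Prod>i\<in>I. emeasure lborel (A i))"
      using A r by (intro prod.cong refl emeasure_lborel_affine_vimage) auto
    finally show "emeasure (scale_measure (ennreal (r ^ card I)) (distr ?M ?M f)) (Pi\<^sub>E I A)
        = (\<Prod>i\<in>I. emeasure lborel (A i))" .
  qed simp
  then have "emeasure ?M X = emeasure (scale_measure (ennreal (r ^ card I)) (distr ?M ?M f)) X"
    by simp
  also have "\<dots> = ennreal (r ^ card I) * emeasure ?M (f -` X \<inter> space ?M)"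
    using X f by (simp add: emeasure_distr)
  finally show ?thesis unfolding f_def .
qed

lemma L2_set_diff_commute: "L2_set (\<lambda>j. f j - g j) A = L2_set (\<lambda>j. g j - f j) A"
  unfolding L2_set_def by (simp add: power2_commute)

lemma L2_set_diff_triangle:
  "L2_set (\<lambda>j. f j - h j) A \<le> L2_set (\<lambda>j. f j - g j) A + L2_set (\<lambda>j. g j - h j) A"
  using L2_set_triangle_ineq[of "\<lambda>j. f j - g j" "\<lambda>j. g j - h j" A] by simp

lemma abs_le_L2_set: "finite A \<Longrightarrow> i \<in> A \<Longrightarrow> \<bar>f i\<bar> \<le> L2_set f A"
  using member_le_L2_set[of A i f] member_le_L2_set[of A i "\<lambda>j. - f j"]
  by (simp add: L2_set_def)

lemma L2_set_divide: "c > 0 \<Longrightarrow> L2_set (\<lambda>j. f j / c) A = L2_set f A / c"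
  using L2_set_right_distrib[of "inverse c" f A] by (simp add: field_simps)

text \<open>Points of \<open>(\<real>\<^sup>n)\<^sup>B\<close> are functions of (block, coordinate): uncurried when measured with the
  product Lebesgue measure, curried otherwise.\<close>

abbreviation block_lborel :: "nat \<Rightarrow> nat \<Rightarrow> (nat \<times> nat \<Rightarrow> real) measure" where
  "block_lborel B n \<equiv> PiM ({..<B} \<times> {..<n}) (\<lambda>_. lborel)"

definition block_ball :: "nat \<Rightarrow> nat \<Rightarrow> real \<Rightarrow> (nat \<Rightarrow> nat \<Rightarrow> real) \<Rightarrow> (nat \<times> nat \<Rightarrow> real) set" where
  "block_ball B n r c =
    {x \<in> space (block_lborel B n). \<forall>i\<in>{..<B}. L2_set (\<lambda>j. x (i, j) - c i j) {..<n} < r}"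

definition block_close :: "nat \<Rightarrow> nat \<Rightarrow> real \<Rightarrow> (nat \<Rightarrow> nat \<Rightarrow> real) \<Rightarrow> (nat \<Rightarrow> nat \<Rightarrow> real) \<Rightarrow> bool" where
  "block_close B n r u v \<longleftrightarrow> (\<forall>i<B. L2_set (\<lambda>j. u i j - v i j) {..<n} < r)"

lemma block_close_sym: "block_close B n r u v \<longleftrightarrow> block_close B n r v u"
  unfolding block_close_def by (subst L2_set_diff_commute) (rule refl)

lemma block_ball_sets: "block_ball B n r c \<in> sets (block_lborel B n)"
proof -
  have coord: "(\<lambda>x. x (i, j)) \<in> borel_measurable (block_lborel B n)" if "i < B" "j < n" for i j
    using that measurable_component_singleton[of "(i, j)" "{..<B} \<times> {..<n}" "\<lambda>_. lborel :: real measure"]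
    by simp
  have "(\<lambda>x. L2_set (\<lambda>j. x (i, j) - c i j) {..<n}) \<in> borel_measurable (block_lborel B n)"
    if "i < B" for i
    unfolding L2_set_def using that
    by (intro measurable_compose[OF _ borel_measurable_sqrt] borel_measurable_sum
        borel_measurable_power borel_measurable_diff coord borel_measurable_const) auto
  then show ?thesis unfolding block_ball_def
    by (intro sets.sets_Collect_finite_All borel_measurable_less borel_measurable_const) auto
qed

lemma emeasure_block_ball:
  assumes r: "r > 0"
  shows "emeasure (block_lborel B n) (block_ball B n r c)
       = ennreal (r ^ (B * n)) * emeasure (block_lborel B n) (block_ball B n 1 (\<lambda>_ _. 0))"
proof -
  let ?I = "{..<B} \<times> {..<n}"
  have scaled: "L2_set (\<lambda>j. (if j < n then c i j + r * x (i, j) else undefined) - c i j) {..<n}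
      = r * L2_set (\<lambda>j. x (i, j)) {..<n}" for x i
  proof -
    have "L2_set (\<lambda>j. (if j < n then c i j + r * x (i, j) else undefined) - c i j) {..<n}
        = L2_set (\<lambda>j. r * x (i, j)) {..<n}"
      by (intro L2_set_cong) auto
    then show ?thesis using r by (simp add: L2_set_right_distrib)
  qed
  have "(\<lambda>x. \<lambda>p\<in>?I. case_prod c p + r * x p) -` block_ball B n r c \<inter> space (block_lborel B n)
      = block_ball B n 1 (\<lambda>_ _. 0)"
    using r unfolding block_ball_def by (auto simp: scaled space_PiM)
  then show ?thesis
    using emeasure_PiM_lborel_affine_vimage[OF _ r block_ball_sets, where a="case_prod c"]
    by simp
qed

lemma emeasure_unit_block_ball_pos: "0 < emeasure (block_lborel B n) (block_ball B n 1 (\<lambda>_ _. 0))"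
proof -
  interpret product_sigma_finite "\<lambda>_::nat \<times> nat. lborel :: real measure" by standard
  define d where "d = 1 / (real n + 1)"
  have d: "d > 0" by (simp add: d_def)
  have "Pi\<^sub>E ({..<B} \<times> {..<n}) (\<lambda>_. {-d..d}) \<subseteq> block_ball B n 1 (\<lambda>_ _. 0)"
  proof
    fix x assume x: "x \<in> Pi\<^sub>E ({..<B} \<times> {..<n}) (\<lambda>_. {-d..d})"
    have "L2_set (\<lambda>j. x (i, j) - 0) {..<n} < 1" if "i < B" for i
    proof -
      have "L2_set (\<lambda>j. x (i, j) - 0) {..<n} \<le> (\<Sum>j<n. \<bar>x (i, j) - 0\<bar>)"
        by (rule L2_set_le_sum_abs)
      also have "\<dots> \<le> (\<Sum>j<n. d)"
        using x that by (intro sum_mono) (force simp: PiE_def Pi_def abs_le_iff)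
      also have "\<dots> < 1" by (simp add: d_def field_simps)
      finally show ?thesis .
    qed
    then show "x \<in> block_ball B n 1 (\<lambda>_ _. 0)"
      using x unfolding block_ball_def by (auto simp: space_PiM PiE_def Pi_def)
  qed
  then have "emeasure (block_lborel B n) (Pi\<^sub>E ({..<B} \<times> {..<n}) (\<lambda>_. {-d..d}))
      \<le> emeasure (block_lborel B n) (block_ball B n 1 (\<lambda>_ _. 0))"
    by (intro emeasure_mono block_ball_sets)
  moreover have "emeasure (block_lborel B n) (Pi\<^sub>E ({..<B} \<times> {..<n}) (\<lambda>_. {-d..d}))
      = (\<Prod>p\<in>{..<B} \<times> {..<n}. ennreal (2 * d))"
    using d by (subst emeasure_PiM) auto
  moreover have "(\<Prod>p\<in>{..<B} \<times> {..<n}. ennreal (2 * d)) > 0"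
    using d by (simp add: ennreal_power)
  ultimately show ?thesis by order
qed

lemma emeasure_unit_block_ball_finite:
  "emeasure (block_lborel B n) (block_ball B n 1 (\<lambda>_ _. 0)) < \<infinity>"
proof -
  interpret product_sigma_finite "\<lambda>_::nat \<times> nat. lborel :: real measure" by standard
  have "block_ball B n 1 (\<lambda>_ _. 0) \<subseteq> Pi\<^sub>E ({..<B} \<times> {..<n}) (\<lambda>_. {-1..1})"
  proof
    fix x assume x: "x \<in> block_ball B n 1 (\<lambda>_ _. 0)"
    have "\<bar>x (i, j)\<bar> \<le> 1" if "i < B" "j < n" for i j
    proof -
      have "\<bar>x (i, j) - 0\<bar> \<le> L2_set (\<lambda>j. x (i, j) - 0) {..<n}"
        using that by (intro abs_le_L2_set) auto
      also have "\<dots> < 1" using x that unfolding block_ball_def by auto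
      finally show ?thesis by simp
    qed
    then show "x \<in> Pi\<^sub>E ({..<B} \<times> {..<n}) (\<lambda>_. {-1..1})"
      using x unfolding block_ball_def by (auto simp: space_PiM PiE_def Pi_def abs_le_iff)
  qed
  then have "emeasure (block_lborel B n) (block_ball B n 1 (\<lambda>_ _. 0))
      \<le> emeasure (block_lborel B n) (Pi\<^sub>E ({..<B} \<times> {..<n}) (\<lambda>_. {-1..1}))"
    by (intro emeasure_mono) auto
  also have "\<dots> = (\<Prod>p\<in>{..<B} \<times> {..<n}. ennreal 2)" by (subst emeasure_PiM) auto
  also have "\<dots> < \<infinity>" by (simp add: power_eq_top_ennreal less_top[symmetric])
  finally show ?thesis .
qed

lemma block_balls_disjoint:
  assumes "\<not> block_close B n r u v"
  shows "block_ball B n (r / 2) u \<inter> block_ball B n (r / 2) v = {}"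
proof (rule equals0I)
  fix x assume x: "x \<in> block_ball B n (r / 2) u \<inter> block_ball B n (r / 2) v"
  obtain i where i: "i < B" and far: "r \<le> L2_set (\<lambda>j. u i j - v i j) {..<n}"
    using assms unfolding block_close_def by (auto simp: not_less)
  have "L2_set (\<lambda>j. u i j - v i j) {..<n}
      \<le> L2_set (\<lambda>j. u i j - x (i, j)) {..<n} + L2_set (\<lambda>j. x (i, j) - v i j) {..<n}"
    by (rule L2_set_diff_triangle)
  also have "\<dots> = L2_set (\<lambda>j. x (i, j) - u i j) {..<n} + L2_set (\<lambda>j. x (i, j) - v i j) {..<n}"
    by (simp add: L2_set_diff_commute)
  also have "\<dots> < r / 2 + r / 2"
    using x i unfolding block_ball_def by (intro add_strict_mono) auto
  finally show False using far by simp
qed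

lemma block_ball_subset_block_ball_zero:
  assumes "\<forall>i<B. L2_set (c i) {..<n} \<le> R"
  shows "block_ball B n r c \<subseteq> block_ball B n (R + r) (\<lambda>_ _. 0)"
proof
  fix x assume x: "x \<in> block_ball B n r c"
  have "L2_set (\<lambda>j. x (i, j) - 0) {..<n} < R + r" if i: "i < B" for i
  proof -
    have "L2_set (\<lambda>j. x (i, j) - 0) {..<n}
        \<le> L2_set (\<lambda>j. x (i, j) - c i j) {..<n} + L2_set (\<lambda>j. c i j - 0) {..<n}"
      by (rule L2_set_diff_triangle)
    also have "\<dots> < r + R"
      using x i assms unfolding block_ball_def by (intro add_less_le_mono) auto
    finally show ?thesis by simp
  qed
  then show "x \<in> block_ball B n (R + r) (\<lambda>_ _. 0)"
    using x unfolding block_ball_def by auto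
qed

lemma card_block_separated_le:
  assumes \<epsilon>: "\<epsilon> > 0" and P: "finite P"
    and bounded: "\<forall>u\<in>P. \<forall>i<B. L2_set (u i) {..<n} \<le> 1"
    and separated: "pairwise (\<lambda>u v. \<not> block_close B n \<epsilon> u v) P"
  shows "real (card P) \<le> (1 + 2 / \<epsilon>) ^ (B * n)"
proof -
  let ?\<mu> = "emeasure (block_lborel B n)"
  obtain v where V: "?\<mu> (block_ball B n 1 (\<lambda>_ _. 0)) = ennreal v" and v: "v > 0"
    using emeasure_unit_block_ball_pos[of B n] emeasure_unit_block_ball_finite[of B n]
    by (cases "?\<mu> (block_ball B n 1 (\<lambda>_ _. 0))") (auto simp: ennreal_less_zero_iff)
  have "ennreal (real (card P) * (\<epsilon> / 2) ^ (B * n) * v) = (\<Sum>u\<in>P. ?\<mu> (block_ball B n (\<epsilon> / 2) u))"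
    using \<epsilon> v by (simp add: emeasure_block_ball V ennreal_mult' ennreal_of_nat_eq_real_of_nat mult.assoc)
  also have "\<dots> = ?\<mu> (\<Union>u\<in>P. block_ball B n (\<epsilon> / 2) u)"
    using P separated block_balls_disjoint
    by (intro sum_emeasure) (auto simp: block_ball_sets disjoint_family_on_def pairwise_def)
  also have "\<dots> \<le> ?\<mu> (block_ball B n (1 + \<epsilon> / 2) (\<lambda>_ _. 0))"
    using bounded block_ball_subset_block_ball_zero[where R=1]
    by (intro emeasure_mono block_ball_sets) blast
  also have "\<dots> = ennreal ((1 + \<epsilon> / 2) ^ (B * n) * v)"
    using \<epsilon> v by (simp add: emeasure_block_ball V ennreal_mult')
  finally have "real (card P) * (\<epsilon> / 2) ^ (B * n) \<le> (1 + \<epsilon> / 2) ^ (B * n)"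
    using \<epsilon> v by (subst (asm) ennreal_le_iff) auto
  then have "real (card P) \<le> (1 + \<epsilon> / 2) ^ (B * n) / (\<epsilon> / 2) ^ (B * n)"
    using \<epsilon> by (simp add: field_simps)
  also have "\<dots> = ((1 + \<epsilon> / 2) / (\<epsilon> / 2)) ^ (B * n)"
    by (rule power_divide[symmetric])
  also have "(1 + \<epsilon> / 2) / (\<epsilon> / 2) = 1 + 2 / \<epsilon>"
    using \<epsilon> by (simp add: field_simps)
  finally show ?thesis .
qed

lemma exists_block_net:
  assumes \<epsilon>: "\<epsilon> > 0" and bounded: "\<forall>u\<in>Z. \<forall>i<B. L2_set (u i) {..<n} \<le> 1"
  obtains P where "finite P" "P \<subseteq> Z" "real (card P) \<le> (1 + 2 / \<epsilon>) ^ (B * n)"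
    "\<forall>z\<in>Z. \<exists>p\<in>P. block_close B n \<epsilon> z p"
proof -
  define separated where "separated P \<longleftrightarrow>
    finite P \<and> P \<subseteq> Z \<and> pairwise (\<lambda>u v. \<not> block_close B n \<epsilon> u v) P" for P
  have card_bound: "real (card P) \<le> (1 + 2 / \<epsilon>) ^ (B * n)" if "separated P" for P
    using that bounded \<epsilon> unfolding separated_def by (intro card_block_separated_le) auto
  obtain K :: nat where K: "(1 + 2 / \<epsilon>) ^ (B * n) < real K"
    using reals_Archimedean2 by blast
  have "separated {}" unfolding separated_def by simp
  then obtain P where P: "separated P" and maximal: "\<And>Q. separated Q \<Longrightarrow> card Q \<le> card P"
    using ex_has_greatest_nat[of separated "{}" card K] card_bound K by force
  have "\<exists>p\<in>P. block_close B n \<epsilon> z p" if z: "z \<in> Z" for z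
  proof (rule ccontr)
    assume far: "\<not> (\<exists>p\<in>P. block_close B n \<epsilon> z p)"
    moreover have "block_close B n \<epsilon> z z" using \<epsilon> unfolding block_close_def by (simp add: L2_set_def)
    ultimately have "z \<notin> P" by blast
    have "separated (insert z P)"
      using P z far unfolding separated_def by (auto simp: pairwise_insert block_close_sym)
    from maximal[OF this] P \<open>z \<notin> P\<close> show False unfolding separated_def by simp
  qed
  then show thesis using that P card_bound[OF P] unfolding separated_def by blast
qed

lemma mod_power_div_power_mod:
  fixes n j e k :: nat
  assumes "e < k"
  shows "(j mod n ^ k) div n ^ e mod n = j div n ^ e mod n"
proof -
  have k: "n ^ k = n ^ e * n ^ (k - e)" using assms by (simp flip: power_add)
  have "(j mod n ^ k) div n ^ e = (j div n ^ e) mod n ^ (k - e)"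
    unfolding k by (simp add: mod_mult2_eq div_add1_eq power_0_left)
  moreover have "n dvd n ^ (k - e)" using assms by (simp add: dvd_power)
  ultimately show ?thesis by (simp add: mod_mod_cancel)
qed

lemma kron_Suc:
  assumes j: "j < n * n ^ k"
  shows "kron n (Suc k) us j = us 0 (j div n ^ k) * kron n k (\<lambda>i. us (Suc i)) (j mod n ^ k)"
proof -
  have "n ^ k > 0" using j by (cases "n ^ k = 0") auto
  then have "j mod n ^ k < n ^ k" by simp
  moreover have "j div n ^ k < n" using j by (simp add: less_mult_imp_div_less mult.commute)
  moreover have "kron n (Suc k) us j = (\<Prod>i<Suc k. us i (j div n ^ (Suc k - 1 - i) mod n))"
    using j by (simp add: kron_def mult.commute)
  moreover have "\<dots> = us 0 (j div n ^ k mod n) * (\<Prod>i<k. us (Suc i) (j div n ^ (k - 1 - i) mod n))"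
    by (simp only: prod.lessThan_Suc_shift) simp
  moreover have "(\<Prod>i<k. us (Suc i) (j div n ^ (k - 1 - i) mod n))
      = (\<Prod>i<k. us (Suc i) (j mod n ^ k div n ^ (k - 1 - i) mod n))"
    by (intro prod.cong refl) (simp add: mod_power_div_power_mod)
  ultimately show ?thesis by (simp add: kron_def)
qed

lemma sum_lessThan_mult_div_mod:
  fixes g :: "nat \<Rightarrow> nat \<Rightarrow> 'a::comm_monoid_add"
  shows "(\<Sum>j<n * m. g (j div m) (j mod m)) = (\<Sum>a<n. \<Sum>b<m. g a b)"
proof (cases "m = 0")
  case False
  have "(\<Sum>a<n. \<Sum>b<m. g a b) = (\<Sum>(a, b)\<in>{..<n} \<times> {..<m}. g a b)"
    by (simp add: sum.cartesian_product)
  also have "\<dots> = (\<Sum>j<n * m. g (j div m) (j mod m))"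
  proof (rule sum.reindex_bij_witness[of _ "\<lambda>j. (j div m, j mod m)" "\<lambda>(a, b). a * m + b"])
    fix p assume "p \<in> {..<n} \<times> {..<m}"
    then obtain a b where p: "p = (a, b)" "a < n" "b < m" by blast
    have "a * m + b < (a + 1) * m" using p by simp
    also have "\<dots> \<le> n * m" using p by (intro mult_right_mono) auto
    finally show "(case p of (a, b) \<Rightarrow> a * m + b) \<in> {..<n * m}" using p by simp
  qed (use False in \<open>auto simp: less_mult_imp_div_less\<close>)
  finally show ?thesis ..
qed simp

lemma L2_set_mult_div_mod:
  fixes a x :: "nat \<Rightarrow> real"
  shows "L2_set (\<lambda>j. a (j div m) * x (j mod m)) {..<n * m} = L2_set a {..<n} * L2_set x {..<m}"
proof -
  have "(\<Sum>j<n * m. (a (j div m) * x (j mod m))\<^sup>2) = (\<Sum>p<n. \<Sum>q<m. (a p * x q)\<^sup>2)"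
    by (rule sum_lessThan_mult_div_mod)
  also have "\<dots> = (\<Sum>p<n. (a p)\<^sup>2) * (\<Sum>q<m. (x q)\<^sup>2)"
    by (simp add: sum_product power_mult_distrib)
  finally show ?thesis unfolding L2_set_def by (simp add: real_sqrt_mult)
qed

lemma L2_set_kron: "L2_set (kron n k us) {..<n ^ k} = (\<Prod>i<k. L2_set (us i) {..<n})"
proof (induction k arbitrary: us)
  case 0
  then show ?case by (simp add: kron_def L2_set_def lessThan_Suc)
next
  case (Suc k)
  have "L2_set (kron n (Suc k) us) {..<n ^ Suc k}
      = L2_set (\<lambda>j. us 0 (j div n ^ k) * kron n k (\<lambda>i. us (Suc i)) (j mod n ^ k)) {..<n * n ^ k}"
    by (intro L2_set_cong) (auto simp: kron_Suc)
  also have "\<dots> = L2_set (us 0) {..<n} * L2_set (kron n k (\<lambda>i. us (Suc i))) {..<n ^ k}"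
    by (rule L2_set_mult_div_mod)
  finally show ?case
    using Suc.IH by (simp add: prod.lessThan_Suc_shift del: prod.lessThan_Suc)
qed

text \<open>Telescoping over the factors: \<open>u\<^sub>0 \<otimes> X - v\<^sub>0 \<otimes> Y = (u\<^sub>0 - v\<^sub>0) \<otimes> X + v\<^sub>0 \<otimes> (X - Y)\<close>.\<close>

lemma kron_lipschitz:
  assumes "\<forall>i<k. L2_set (us i) {..<n} \<le> 1" and "\<forall>i<k. L2_set (vs i) {..<n} \<le> 1"
  shows "L2_set (\<lambda>j. kron n k us j - kron n k vs j) {..<n ^ k}
    \<le> (\<Sum>i<k. L2_set (\<lambda>l. us i l - vs i l) {..<n})"
  using assms
proof (induction k arbitrary: us vs)
  case 0
  then show ?case by (simp add: kron_def L2_set_def)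
next
  case (Suc k)
  define X where "X = kron n k (\<lambda>i. us (Suc i))"
  define Y where "Y = kron n k (\<lambda>i. vs (Suc i))"
  have X: "L2_set X {..<n ^ k} \<le> 1"
    unfolding X_def L2_set_kron using Suc.prems by (intro prod_le_1) auto
  have v0: "L2_set (vs 0) {..<n} \<le> 1" using Suc.prems by auto
  have "L2_set (\<lambda>j. kron n (Suc k) us j - kron n (Suc k) vs j) {..<n ^ Suc k}
      = L2_set (\<lambda>j. (us 0 (j div n ^ k) - vs 0 (j div n ^ k)) * X (j mod n ^ k)
                   + vs 0 (j div n ^ k) * (X (j mod n ^ k) - Y (j mod n ^ k))) {..<n * n ^ k}"
    by (intro L2_set_cong) (auto simp: kron_Suc X_def Y_def algebra_simps)
  also have "\<dots> \<le> L2_set (\<lambda>j. (us 0 (j div n ^ k) - vs 0 (j div n ^ k)) * X (j mod n ^ k)) {..<n * n ^ k}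
      + L2_set (\<lambda>j. vs 0 (j div n ^ k) * (X (j mod n ^ k) - Y (j mod n ^ k))) {..<n * n ^ k}"
    by (rule L2_set_triangle_ineq)
  also have "\<dots> = L2_set (\<lambda>l. us 0 l - vs 0 l) {..<n} * L2_set X {..<n ^ k}
      + L2_set (vs 0) {..<n} * L2_set (\<lambda>l. X l - Y l) {..<n ^ k}"
    by (simp add: L2_set_mult_div_mod[where a="\<lambda>l. us 0 l - vs 0 l"]
        L2_set_mult_div_mod[where x="\<lambda>l. X l - Y l"])
  also have "\<dots> \<le> L2_set (\<lambda>l. us 0 l - vs 0 l) {..<n} * 1 + 1 * L2_set (\<lambda>l. X l - Y l) {..<n ^ k}"
    using X v0 by (intro add_mono mult_mono) auto
  also have "\<dots> \<le> L2_set (\<lambda>l. us 0 l - vs 0 l) {..<n}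
      + (\<Sum>i<k. L2_set (\<lambda>l. us (Suc i) l - vs (Suc i) l) {..<n})"
    using Suc.IH[of "\<lambda>i. us (Suc i)" "\<lambda>i. vs (Suc i)"] Suc.prems unfolding X_def Y_def by auto
  also have "\<dots> = (\<Sum>i<Suc k. L2_set (\<lambda>l. us i l - vs i l) {..<n})"
    by (simp add: sum.lessThan_Suc_shift del: sum.lessThan_Suc)
  finally show ?case .
qed

lemma vnorm_eq_L2_set: "vnorm N x = L2_set x {..<N}"
  by (simp add: vnorm_def L2_set_def)

lemma vdist_eq_L2_set: "vdist N x y = L2_set (\<lambda>i. x i - y i) {..<N}"
  by (simp add: vdist_def L2_set_def)

lemma L2_set_usphere: "u \<in> usphere n \<Longrightarrow> L2_set u {..<n} = 1"
  by (simp add: usphere_def vnorm_eq_L2_set)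

lemma vdist_le_vnorm_add: "vdist N x y \<le> vnorm N x + vnorm N y"
proof -
  have "vdist N x y = L2_set (\<lambda>i. x i + - y i) {..<N}" by (simp add: vdist_eq_L2_set)
  also have "\<dots> \<le> L2_set x {..<N} + L2_set (\<lambda>i. - y i) {..<N}" by (rule L2_set_triangle_ineq)
  finally show ?thesis by (simp add: vnorm_eq_L2_set L2_set_def)
qed

lemma vnorm_add_orthonormal:
  assumes "vnorm N x = 1" and "vnorm N y = 1" and "vinner N x y = 0"
  shows "vnorm N (\<lambda>j. x j + y j) = sqrt 2"
proof -
  have "(\<Sum>j<N. (x j + y j)\<^sup>2) = (\<Sum>j<N. (x j)\<^sup>2) + (\<Sum>j<N. (y j)\<^sup>2) + 2 * (\<Sum>j<N. x j * y j)"
    by (simp add: power2_sum sum.distrib sum_distrib_left mult.assoc)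
  then show ?thesis using assms by (simp add: vnorm_def vinner_def)
qed

lemma kron_cong: "(\<And>i. i < k \<Longrightarrow> us i = vs i) \<Longrightarrow> kron n k us = kron n k vs"
  unfolding kron_def by (intro ext) (auto intro: prod.cong)

lemma vnorm_kron_usphere: "\<forall>i<k. us i \<in> usphere n \<Longrightarrow> vnorm (n ^ k) (kron n k us) = 1"
  by (simp add: vnorm_eq_L2_set L2_set_kron L2_set_usphere)

lemma sum_le_of_block_close:
  "block_close B n e u v \<Longrightarrow> (\<Sum>i<B. L2_set (\<lambda>j. u i j - v i j) {..<n}) \<le> real B * e"
  using sum_mono[of "{..<B}" "\<lambda>i. L2_set (\<lambda>j. u i j - v i j) {..<n}" "\<lambda>_. e"]
  unfolding block_close_def by fastforce

lemma vdist_kron_le: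
  assumes "\<forall>i<k. us i \<in> usphere n" and "\<forall>i<k. vs i \<in> usphere n" and "block_close k n e us vs"
  shows "vdist (n ^ k) (kron n k us) (kron n k vs) \<le> real k * e"
proof -
  have "vdist (n ^ k) (kron n k us) (kron n k vs) \<le> (\<Sum>i<k. L2_set (\<lambda>l. us i l - vs i l) {..<n})"
    unfolding vdist_eq_L2_set using assms by (intro kron_lipschitz) (auto simp: L2_set_usphere)
  also have "\<dots> \<le> real k * e" using assms(3) by (rule sum_le_of_block_close)
  finally show ?thesis .
qed

text \<open>A point of \<open>S\<^sub>2\<close> is parametrised by \<open>2\<kappa>\<close> unit vectors \<open>w\<close>: the first \<open>\<kappa>\<close> form \<open>x\<close>, the last \<open>\<kappa>\<close> form \<open>y\<close>.\<close>

definition normalized_kron_sum :: "nat \<Rightarrow> nat \<Rightarrow> (nat \<Rightarrow> nat \<Rightarrow> real) \<Rightarrow> nat \<Rightarrow> real" where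
  "normalized_kron_sum n k w = (\<lambda>j. (kron n k w j + kron n k (\<lambda>i. w (i + k)) j) /
      vnorm (n ^ k) (\<lambda>j. kron n k w j + kron n k (\<lambda>i. w (i + k)) j))"

definition orthogonal_kron_pairs :: "nat \<Rightarrow> nat \<Rightarrow> (nat \<Rightarrow> nat \<Rightarrow> real) set" where
  "orthogonal_kron_pairs n k = {w. (\<forall>i<2 * k. w i \<in> usphere n) \<and>
      vinner (n ^ k) (kron n k w) (kron n k (\<lambda>i. w (i + k))) = 0}"

lemma S1_eq_image: "S1 n k = kron n k ` {us. \<forall>i<k. us i \<in> usphere n}"
  unfolding S1_def by blast

lemma S2_eq_image: "S2 n k = normalized_kron_sum n k ` orthogonal_kron_pairs n k"
proof
  show "S2 n k \<subseteq> normalized_kron_sum n k ` orthogonal_kron_pairs n k"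
  proof
    fix z assume "z \<in> S2 n k"
    then obtain us vs where us: "\<forall>i<k. us i \<in> usphere n" and vs: "\<forall>i<k. vs i \<in> usphere n"
      and orth: "vinner (n ^ k) (kron n k us) (kron n k vs) = 0"
      and z: "z = (\<lambda>j. (kron n k us j + kron n k vs j) / vnorm (n ^ k) (\<lambda>j. kron n k us j + kron n k vs j))"
      unfolding S2_def S1_def by blast
    define w where "w i = (if i < k then us i else vs (i - k))" for i
    have kron_w: "kron n k w = kron n k us" "kron n k (\<lambda>i. w (i + k)) = kron n k vs"
      by (auto intro: kron_cong simp: w_def)
    have "z = normalized_kron_sum n k w"
      unfolding normalized_kron_sum_def kron_w z ..
    moreover have "\<forall>i<2 * k. w i \<in> usphere n" using us vs by (simp add: w_def)
    then have "w \<in> orthogonal_kron_pairs n k"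
      using orth unfolding orthogonal_kron_pairs_def by (simp add: kron_w)
    ultimately show "z \<in> normalized_kron_sum n k ` orthogonal_kron_pairs n k" by blast
  qed
  show "normalized_kron_sum n k ` orthogonal_kron_pairs n k \<subseteq> S2 n k"
    unfolding orthogonal_kron_pairs_def normalized_kron_sum_def S2_def S1_def by fastforce
qed

lemma vnorm_kron_sum:
  assumes "w \<in> orthogonal_kron_pairs n k"
  shows "vnorm (n ^ k) (\<lambda>j. kron n k w j + kron n k (\<lambda>i. w (i + k)) j) = sqrt 2"
  using assms unfolding orthogonal_kron_pairs_def
  by (intro vnorm_add_orthonormal vnorm_kron_usphere) auto

lemma normalized_kron_sum_eq:
  assumes "w \<in> orthogonal_kron_pairs n k"
  shows "normalized_kron_sum n k w = (\<lambda>j. (kron n k w j + kron n k (\<lambda>i. w (i + k)) j) / sqrt 2)"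
  using vnorm_kron_sum[OF assms] unfolding normalized_kron_sum_def by simp

lemma vnorm_S12:
  assumes "x \<in> S12 n k"
  shows "vnorm (n ^ k) x = 1"
proof (cases "x \<in> S1 n k")
  case True
  then show ?thesis unfolding S1_eq_image by (auto simp: vnorm_kron_usphere)
next
  case False
  then obtain w where w: "w \<in> orthogonal_kron_pairs n k" and x: "x = normalized_kron_sum n k w"
    using assms unfolding S12_def S2_eq_image by blast
  show ?thesis
    using vnorm_kron_sum[OF w] unfolding x normalized_kron_sum_eq[OF w]
    by (simp add: vnorm_eq_L2_set L2_set_divide)
qed

lemma vdist_normalized_kron_sum_le:
  assumes w: "w \<in> orthogonal_kron_pairs n k" and p: "p \<in> orthogonal_kron_pairs n k"
    and close: "block_close (2 * k) n e w p"
  shows "vdist (n ^ k) (normalized_kron_sum n k w) (normalized_kron_sum n k p) \<le> 2 * real k * e"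
proof -
  let ?x = "kron n k w" and ?y = "kron n k (\<lambda>i. w (i + k))"
  let ?x' = "kron n k p" and ?y' = "kron n k (\<lambda>i. p (i + k))"
  have "vdist (n ^ k) (normalized_kron_sum n k w) (normalized_kron_sum n k p)
      = L2_set (\<lambda>j. (?x j - ?x' j) + (?y j - ?y' j)) {..<n ^ k} / sqrt 2"
    by (simp add: normalized_kron_sum_eq[OF w] normalized_kron_sum_eq[OF p] vdist_eq_L2_set
        flip: L2_set_divide diff_divide_distrib) (simp add: algebra_simps)
  also have "\<dots> \<le> L2_set (\<lambda>j. (?x j - ?x' j) + (?y j - ?y' j)) {..<n ^ k}"
    by (simp add: divide_le_eq mult_le_cancel_left1 not_less)
  also have "\<dots> \<le> vdist (n ^ k) ?x ?x' + vdist (n ^ k) ?y ?y'"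
    unfolding vdist_eq_L2_set by (rule L2_set_triangle_ineq)
  also have "\<dots> \<le> real k * e + real k * e"
    using w p close unfolding orthogonal_kron_pairs_def
    by (intro add_mono vdist_kron_le) (auto simp: block_close_def)
  finally show ?thesis by (simp add: algebra_simps)
qed

definition is_net :: "nat \<Rightarrow> (nat \<Rightarrow> real) set \<Rightarrow> real \<Rightarrow> (nat \<Rightarrow> real) set \<Rightarrow> bool" where
  "is_net N S t T \<longleftrightarrow> finite T \<and> T \<subseteq> S \<and> (\<forall>x\<in>S. \<exists>y\<in>T. vdist N x y \<le> t)"

lemma covering_number_le_card:
  assumes "is_net N S t T"
  obtains k where "covering_number N S t = enat k" and "k \<le> card T"
proof -
  have "covering_number N S t \<le> enat (card T)"
    using assms unfolding covering_number_def is_net_def by (intro INF_lower2[of T]) auto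
  then show thesis using that by (cases "covering_number N S t") auto
qed

lemma is_net_Un: "is_net N S t T \<Longrightarrow> is_net N S' t T' \<Longrightarrow> is_net N (S \<union> S') t (T \<union> T')"
  unfolding is_net_def by blast

lemma is_net_image:
  assumes "finite P" and "P \<subseteq> Z" and "\<forall>z\<in>Z. \<exists>p\<in>P. R z p"
    and "\<And>z p. z \<in> Z \<Longrightarrow> p \<in> Z \<Longrightarrow> R z p \<Longrightarrow> vdist N (f z) (f p) \<le> t"
  shows "is_net N (f ` Z) t (f ` P)"
  using assms unfolding is_net_def by blast

lemma is_net_unit_vectors:
  assumes "\<forall>x\<in>S. vnorm N x = 1" and "2 \<le> t"
  obtains T where "is_net N S t T" and "card T \<le> 1"
proof (cases "S = {}")
  case True
  then show thesis using that[of "{}"] by (simp add: is_net_def)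
next
  case False
  then obtain y where y: "y \<in> S" by blast
  have "vdist N x y \<le> t" if "x \<in> S" for x
    using vdist_le_vnorm_add[of N x y] assms that y by simp
  then show thesis using that[of "{y}"] y by (simp add: is_net_def)
qed

lemma S1_net:
  assumes e: "e > 0" and t: "real k * e \<le> t"
  obtains T where "is_net (n ^ k) (S1 n k) t T" and "real (card T) \<le> (1 + 2 / e) ^ (k * n)"
proof -
  let ?Z = "{us. \<forall>i<k. us i \<in> usphere n}"
  have "\<forall>u\<in>?Z. \<forall>i<k. L2_set (u i) {..<n} \<le> 1" by (simp add: L2_set_usphere)
  then obtain P where P: "finite P" "P \<subseteq> ?Z" "real (card P) \<le> (1 + 2 / e) ^ (k * n)"
    and net: "\<forall>z\<in>?Z. \<exists>p\<in>P. block_close k n e z p"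
    by (rule exists_block_net[OF e])
  have "vdist (n ^ k) (kron n k z) (kron n k p) \<le> t" if "z \<in> ?Z" "p \<in> ?Z" "block_close k n e z p" for z p
    using vdist_kron_le[of k z n p e] that t by simp
  then have "is_net (n ^ k) (S1 n k) t (kron n k ` P)"
    unfolding S1_eq_image by (rule is_net_image[OF P(1,2) net])
  moreover have "real (card (kron n k ` P)) \<le> (1 + 2 / e) ^ (k * n)"
    using P(3) card_image_le[OF P(1), of "kron n k"] by linarith
  ultimately show thesis by (rule that)
qed

lemma S2_net:
  assumes e: "e > 0" and t: "2 * real k * e \<le> t"
  obtains T where "is_net (n ^ k) (S2 n k) t T" and "real (card T) \<le> (1 + 2 / e) ^ (2 * k * n)"
proof -
  let ?Z = "orthogonal_kron_pairs n k"
  have "\<forall>u\<in>?Z. \<forall>i<2 * k. L2_set (u i) {..<n} \<le> 1"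
    by (simp add: orthogonal_kron_pairs_def L2_set_usphere)
  then obtain P where P: "finite P" "P \<subseteq> ?Z" "real (card P) \<le> (1 + 2 / e) ^ (2 * k * n)"
    and net: "\<forall>z\<in>?Z. \<exists>p\<in>P. block_close (2 * k) n e z p"
    by (rule exists_block_net[OF e])
  have "vdist (n ^ k) (normalized_kron_sum n k z) (normalized_kron_sum n k p) \<le> t"
    if "z \<in> ?Z" "p \<in> ?Z" "block_close (2 * k) n e z p" for z p
    using vdist_normalized_kron_sum_le[OF that] t by simp
  then have "is_net (n ^ k) (S2 n k) t (normalized_kron_sum n k ` P)"
    unfolding S2_eq_image by (rule is_net_image[OF P(1,2) net])
  moreover have "real (card (normalized_kron_sum n k ` P)) \<le> (1 + 2 / e) ^ (2 * k * n)"
    using P(3) card_image_le[OF P(1), of "normalized_kron_sum n k"] by linarith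
  ultimately show thesis by (rule that)
qed

lemma S12_net_small_radius:
  assumes t: "0 < t" "t \<le> 2 * real k"
  obtains T where "is_net (n ^ k) (S12 n k) t T"
    and "real (card T) \<le> ((6 * real k / t) ^ (k * n) + 1)\<^sup>2"
proof -
  define M where "M = (6 * real k / t) ^ (k * n)"
  define e where "e = t / (2 * real k)"
  have e: "e > 0" "real k * e \<le> t" "2 * real k * e \<le> t"
    using t by (auto simp: e_def)
  have "1 + 2 / e \<le> 6 * real k / t"
    using t by (simp add: e_def field_simps)
  then have base: "(1 + 2 / e) ^ (k * n) \<le> M"
    unfolding M_def using e by (intro power_mono) auto
  obtain T1 where T1: "is_net (n ^ k) (S1 n k) t T1" "real (card T1) \<le> (1 + 2 / e) ^ (k * n)"
    using S1_net[OF e(1,2)] .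
  obtain T2 where T2: "is_net (n ^ k) (S2 n k) t T2" "real (card T2) \<le> (1 + 2 / e) ^ (2 * k * n)"
    using S2_net[OF e(1,3)] .
  have "(1 + 2 / e) ^ (2 * k * n) = ((1 + 2 / e) ^ (k * n))\<^sup>2"
    by (simp add: mult_ac flip: power_mult)
  also have "\<dots> \<le> M\<^sup>2" using base e by (intro power_mono) auto
  finally have "real (card T1) + real (card T2) \<le> (M + 1)\<^sup>2"
    using T1(2) T2(2) base e by (simp add: power2_eq_square algebra_simps)
  moreover have "card (T1 \<union> T2) \<le> card T1 + card T2" by (rule card_Un_le)
  ultimately have "real (card (T1 \<union> T2)) \<le> ((6 * real k / t) ^ (k * n) + 1)\<^sup>2"
    unfolding M_def by linarith
  moreover have "is_net (n ^ k) (S12 n k) t (T1 \<union> T2)"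
    unfolding S12_def by (rule is_net_Un[OF T1(1) T2(1)])
  ultimately show thesis by (intro that)
qed

lemma S12_net_large_radius:
  assumes "2 \<le> t"
  obtains T where "is_net (n ^ k) (S12 n k) t T" and "card T \<le> 1"
  by (rule is_net_unit_vectors[of "S12 n k" "n ^ k" t]) (use vnorm_S12 assms in auto)

theorem lemma1:
  fixes n \<kappa> :: nat and t :: real
  assumes "n \<ge> 1" and "\<kappa> \<ge> 1" and "t > 0"
  shows "\<exists>k::nat. covering_number (n ^ \<kappa>) (S12 n \<kappa>) t = enat k \<and>
           real k \<le> ((6 * real \<kappa> / t) ^ (\<kappa> * n) + 1) ^ 2"
proof -
  obtain T where T: "is_net (n ^ \<kappa>) (S12 n \<kappa>) t T"
    and card_T: "real (card T) \<le> ((6 * real \<kappa> / t) ^ (\<kappa> * n) + 1)\<^sup>2"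
  proof (cases "t \<le> 2 * real \<kappa>")
    case True
    show thesis by (rule S12_net_small_radius[OF assms(3) True]) (rule that)
  next
    case False
    then have "2 \<le> t" using assms(2) by linarith
    then obtain T where T: "is_net (n ^ \<kappa>) (S12 n \<kappa>) t T" and "card T \<le> 1"
      by (rule S12_net_large_radius)
    moreover have "1 \<le> ((6 * real \<kappa> / t) ^ (\<kappa> * n) + 1)\<^sup>2"
      using assms(3) by (simp add: one_le_power)
    ultimately have "real (card T) \<le> ((6 * real \<kappa> / t) ^ (\<kappa> * n) + 1)\<^sup>2" by linarith
    with T show thesis by (rule that)
  qed
  obtain k where "covering_number (n ^ \<kappa>) (S12 n \<kappa>) t = enat k" and "k \<le> card T"
    using covering_number_le_card[OF T] .
  then show ?thesis using card_T by (intro exI[of _ k]) auto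
qed

end
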